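(* There is a constant $c_1>0$ such that for all sufficiently large $N$ there exists a non-feasible pair $(N,M)$ for the family of line graphs of acyclic graphs, and the smallest such $M$ satisfies $M \leq \frac{N^2}{2} - c_1N\sqrt{N}$.
   Context: All graphs are finite and simple; $L(F)$ is the line graph of $F$. For integers $N \ge 1$ and $0\le M\le\binom{N}{2}$, the pair $(N,M)$ is feasible for the family of line graphs of acyclic graphs if there is an acyclic graph $F$ with $N$ edges such that $L(F)$ has exactly $M$ edges; otherwise it is non-feasible. *)

theory Defs
  imports Complex_Main
begin

text \<open>Vertices are natural numbers (a forest with N edges has at most 2N non-isolated vertices,
  and isolated vertices do not matter for edge counts).\<close>

definition simple_graph :: "'a set set \<Rightarrow> bool" where
  "simple_graph E \<longleftrightarrow> finite E \<and> (\<forall>e\<in>E. card e = 2)"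

definition is_cycle :: "'a set set \<Rightarrow> 'a list \<Rightarrow> bool" where
  "is_cycle E vs \<longleftrightarrow> length vs \<ge> 3 \<and> distinct vs \<and>
     (\<forall>i < length vs. {vs ! i, vs ! ((i + 1) mod length vs)} \<in> E)"

definition acyclic_graph :: "'a set set \<Rightarrow> bool" where
  "acyclic_graph E \<longleftrightarrow> simple_graph E \<and> \<not> (\<exists>vs. is_cycle E vs)"

definition line_graph_edges :: "'a set set \<Rightarrow> 'a set set set" where
  "line_graph_edges E = {{e, f} | e f. e \<in> E \<and> f \<in> E \<and> e \<noteq> f \<and> e \<inter> f \<noteq> {}}"

definition feasible_acyclic_line :: "nat \<Rightarrow> nat \<Rightarrow> bool" where
  "feasible_acyclic_line N M \<longleftrightarrow>
     (\<exists>F :: nat set set. acyclic_graph F \<and> card F = N \<and> card (line_graph_edges F) = M)"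

definition non_feasible_acyclic_line :: "nat \<Rightarrow> nat \<Rightarrow> bool" where
  "non_feasible_acyclic_line N M \<longleftrightarrow> 1 \<le> N \<and> M \<le> N choose 2 \<and> \<not> feasible_acyclic_line N M"

end

theory Submission
  imports Defs "HOL-Library.Discrete_Functions"
begin

text \<open>Let \<open>F\<close> be a forest, or more generally a triangle-free graph, with \<open>N\<close> edges, let \<open>D\<close> be its
  maximum degree, attained at \<open>v\<close>, and let \<open>I\<close> be the number of edges of \<open>L(F)\<close>. The star at \<open>v\<close>
  gives \<open>I \<ge> C(D,2)\<close>. An edge missing \<open>v\<close> meets at most one edge at \<open>v\<close> (two would close a
  triangle), so \<open>I \<le> C(D,2) + (N - D) + C(N - D,2)\<close>; and every edge meets at most \<open>2(D - 1)\<close>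
  others, so \<open>I \<le> 2N(D - 1)\<close>. For \<open>k = \<lfloor>\<surd>N\<rfloor>\<close> these bounds rule out \<open>I = C(N - k + 1,2) - 1\<close>:
  for \<open>D > N - k\<close> the star is too large, for \<open>D \<le> k\<close> the degree bound is too small, and in
  between the middle bound, convex in \<open>D\<close>, is largest at \<open>D = N - k\<close>, where it is still too small.
  Finally \<open>C(N - k + 1,2) \<le> N\<^sup>2/2 - N\<surd>N/2\<close>.\<close>

definition degree :: "'a set set \<Rightarrow> 'a \<Rightarrow> nat" where
  "degree F x = card {e\<in>F. x \<in> e}"

definition triangle_free :: "'a set set \<Rightarrow> bool" where
  "triangle_free F \<longleftrightarrow>
     \<not> (\<exists>u v w. u \<noteq> v \<and> v \<noteq> w \<and> w \<noteq> u \<and> {u, v} \<in> F \<and> {v, w} \<in> F \<and> {w, u} \<in> F)"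

lemma simple_graph_edgeE:
  assumes "simple_graph F" "e \<in> F"
  obtains x y where "e = {x, y}" "x \<noteq> y"
  using assms unfolding simple_graph_def by (meson card_2_iff)

lemma simple_graph_edge_eq:
  assumes "simple_graph F" "e \<in> F" "x \<in> e" "y \<in> e" "x \<noteq> y"
  shows "e = {x, y}"
proof -
  obtain a b where "e = {a, b}" "a \<noteq> b" using simple_graph_edgeE[OF assms(1,2)] .
  then show ?thesis using assms(3-5) by auto
qed

lemma degree_le_card: "finite F \<Longrightarrow> degree F x \<le> card F"
  unfolding degree_def by (rule card_mono) auto

lemma ex_max_degree:
  assumes "finite F"
  obtains v where "\<And>x. degree F x \<le> degree F v"
proof -
  have "range (degree F) \<subseteq> {0..card F}"
    unfolding degree_def using assms by (auto intro: card_mono)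
  then have fin: "finite (range (degree F))" using finite_subset by blast
  obtain v where "degree F v = Max (range (degree F))" using Max_in[OF fin] by auto
  then show ?thesis using that Max_ge[OF fin] by (metis rangeI)
qed

lemma max_degree_pos:
  assumes "simple_graph F" "F \<noteq> {}" "\<And>x. degree F x \<le> degree F v"
  shows "0 < degree F v"
proof -
  obtain e where "e \<in> F" using assms(2) by blast
  then obtain x y where "e = {x, y}" using simple_graph_edgeE[OF assms(1)] by blast
  then have "0 < degree F x"
    using \<open>e \<in> F\<close> assms(1) by (auto simp: degree_def simple_graph_def card_gt_0_iff)
  then show ?thesis using assms(3)[of x] by linarith
qed

lemma acyclic_graph_triangle_free:
  assumes "acyclic_graph F"
  shows "triangle_free F"
  unfolding triangle_free_def
proof clarify
  fix u v w
  assume distinct: "u \<noteq> v" "v \<noteq> w" "w \<noteq> u" and edges: "{u, v} \<in> F" "{v, w} \<in> F" "{w, u} \<in> F"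
  have "is_cycle F [u, v, w]"
    unfolding is_cycle_def
  proof (intro conjI allI impI)
    fix i assume "i < length [u, v, w]"
    then have "i = 0 \<or> i = 1 \<or> i = 2" by auto
    then show "{[u, v, w] ! i, [u, v, w] ! ((i + 1) mod length [u, v, w])} \<in> F"
      using edges by auto
  qed (use distinct in auto)
  then show False using assms unfolding acyclic_graph_def by blast
qed

lemma triangle_free_card_edges_at_meeting_le_1:
  assumes F: "simple_graph F" "triangle_free F" and b: "b \<in> F" "v \<notin> b"
  shows "card {a\<in>F. v \<in> a \<and> a \<inter> b \<noteq> {}} \<le> 1"
proof -
  have "a1 = a2" if a1: "a1 \<in> F" "v \<in> a1" "a1 \<inter> b \<noteq> {}" and a2: "a2 \<in> F" "v \<in> a2" "a2 \<inter> b \<noteq> {}"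
    for a1 a2
  proof -
    obtain p where p: "p \<in> a1" "p \<in> b" using a1 by blast
    obtain q where q: "q \<in> a2" "q \<in> b" using a2 by blast
    have "p \<noteq> v" "q \<noteq> v" using p q b by auto
    have a1_eq: "a1 = {v, p}" by (rule simple_graph_edge_eq) (use F a1 p \<open>p \<noteq> v\<close> in auto)
    have a2_eq: "a2 = {q, v}" by (rule simple_graph_edge_eq) (use F a2 q \<open>q \<noteq> v\<close> in auto)
    have "p = q"
    proof (rule ccontr)
      assume "p \<noteq> q"
      then have "b = {p, q}" by (rule simple_graph_edge_eq[OF F(1) b(1) p(2) q(2)])
      then show False
        using F(2) \<open>p \<noteq> q\<close> \<open>p \<noteq> v\<close> \<open>q \<noteq> v\<close> a1(1) a2(1) b(1) a1_eq a2_eq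
        unfolding triangle_free_def by blast
    qed
    then show "a1 = a2" using a1_eq a2_eq by auto
  qed
  then show ?thesis using F(1) by (simp add: card_le_Suc0_iff_eq simple_graph_def)
qed

lemma finite_line_graph_edges:
  assumes "finite F"
  shows "finite (line_graph_edges F)"
  by (rule finite_subset[of _ "Pow F"]) (auto simp: line_graph_edges_def assms)

lemma degree_choose_two_le_card_line_graph_edges:
  assumes "finite F"
  shows "degree F v choose 2 \<le> card (line_graph_edges F)"
proof -
  let ?star = "{e\<in>F. v \<in> e}"
  have "{X. X \<subseteq> ?star \<and> card X = 2} \<subseteq> line_graph_edges F"
  proof
    fix X assume "X \<in> {X. X \<subseteq> ?star \<and> card X = 2}"
    then obtain e f where "X = {e, f}" "e \<noteq> f" "e \<in> ?star" "f \<in> ?star"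
      by (auto simp: card_2_iff)
    then show "X \<in> line_graph_edges F" unfolding line_graph_edges_def by blast
  qed
  then have "card {X. X \<subseteq> ?star \<and> card X = 2} \<le> card (line_graph_edges F)"
    by (intro card_mono finite_line_graph_edges assms)
  moreover have "card {X. X \<subseteq> ?star \<and> card X = 2} = degree F v choose 2"
    unfolding degree_def by (rule n_subsets) (simp add: assms)
  ultimately show ?thesis by simp
qed

lemma triangle_free_card_star_cross_edges_le:
  assumes F: "simple_graph F" "triangle_free F"
  shows "card {{a, b} | a b. a \<in> F \<and> v \<in> a \<and> b \<in> F \<and> v \<notin> b \<and> a \<inter> b \<noteq> {}}
    \<le> card {b\<in>F. v \<notin> b}"
proof -
  define B where "B = {b\<in>F. v \<notin> b}"
  define meeting where "meeting b = {a\<in>F. v \<in> a \<and> a \<inter> b \<noteq> {}}" for b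
  have fin: "finite F" "finite B" using F(1) by (simp_all add: simple_graph_def B_def)
  have "{{a, b} | a b. a \<in> F \<and> v \<in> a \<and> b \<in> F \<and> v \<notin> b \<and> a \<inter> b \<noteq> {}}
      = (\<Union>b\<in>B. (\<lambda>a. {a, b}) ` meeting b)"
    unfolding B_def meeting_def by blast
  also have "card \<dots> \<le> (\<Sum>b\<in>B. card ((\<lambda>a. {a, b}) ` meeting b))"
    by (rule card_UN_le[OF fin(2)])
  also have "\<dots> \<le> (\<Sum>b\<in>B. 1)"
  proof (rule sum_mono)
    fix b assume "b \<in> B"
    then have "card (meeting b) \<le> 1"
      unfolding meeting_def by (intro triangle_free_card_edges_at_meeting_le_1[OF F]) (simp_all add: B_def)
    moreover have "card ((\<lambda>a. {a, b}) ` meeting b) \<le> card (meeting b)"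
      by (rule card_image_le) (simp add: meeting_def fin)
    ultimately show "card ((\<lambda>a. {a, b}) ` meeting b) \<le> 1" by linarith
  qed
  finally show ?thesis by (simp add: B_def)
qed

lemma card_line_graph_edges_le_star_split:
  assumes F: "simple_graph F" "triangle_free F"
  shows "card (line_graph_edges F)
    \<le> (degree F v choose 2) + (card F - degree F v) + ((card F - degree F v) choose 2)"
proof -
  define A where "A = {e\<in>F. v \<in> e}"
  define B where "B = {e\<in>F. v \<notin> e}"
  let ?pairs_A = "{X. X \<subseteq> A \<and> card X = 2}" and ?pairs_B = "{X. X \<subseteq> B \<and> card X = 2}"
  let ?cross = "{{a, b} | a b. a \<in> F \<and> v \<in> a \<and> b \<in> F \<and> v \<notin> b \<and> a \<inter> b \<noteq> {}}"
  have fin: "finite F" "finite A" "finite B" using F(1) by (simp_all add: simple_graph_def A_def B_def)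
  have card_B: "card B = card F - degree F v"
  proof -
    have "B = F - A" by (auto simp: A_def B_def)
    then show ?thesis unfolding degree_def A_def[symmetric] by (simp add: card_Diff_subset fin A_def)
  qed
  have "line_graph_edges F \<subseteq> ?pairs_A \<union> ?pairs_B \<union> ?cross"
  proof
    fix X assume "X \<in> line_graph_edges F"
    then obtain e f where X: "X = {e, f}" "e \<in> F" "f \<in> F" "e \<noteq> f" "e \<inter> f \<noteq> {}"
      unfolding line_graph_edges_def by blast
    then consider "X \<in> ?pairs_A" | "X \<in> ?pairs_B" | "X \<in> ?cross"
      unfolding A_def B_def by (cases "v \<in> e"; cases "v \<in> f") (auto simp: insert_commute)
    then show "X \<in> ?pairs_A \<union> ?pairs_B \<union> ?cross" by cases auto
  qed
  moreover have "finite ?pairs_A" "finite ?pairs_B"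
    using fin by (simp_all add: finite_subset[of _ "Pow A"] finite_subset[of _ "Pow B"])
  moreover have "finite ?cross"
    by (rule finite_subset[of _ "Pow F"]) (auto simp: fin)
  ultimately have "card (line_graph_edges F) \<le> card (?pairs_A \<union> ?pairs_B \<union> ?cross)"
    by (intro card_mono) simp_all
  moreover have "card (?pairs_A \<union> ?pairs_B \<union> ?cross) \<le> card ?pairs_A + card ?pairs_B + card ?cross"
    using card_Un_le[of "?pairs_A \<union> ?pairs_B" ?cross] card_Un_le[of ?pairs_A ?pairs_B] by linarith
  moreover have "card ?pairs_A = degree F v choose 2"
    unfolding degree_def A_def[symmetric] using fin(2) by (rule n_subsets)
  moreover have "card ?pairs_B = card B choose 2" using fin(3) by (rule n_subsets)
  moreover have "card ?cross \<le> card B"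
    unfolding B_def by (rule triangle_free_card_star_cross_edges_le[OF F])
  ultimately show ?thesis unfolding card_B by linarith
qed

lemma card_line_graph_edges_le_max_degree:
  assumes F: "simple_graph F" and D: "\<And>x. degree F x \<le> D"
  shows "card (line_graph_edges F) \<le> 2 * card F * (D - 1)"
proof -
  define meeting where "meeting e = {f\<in>F. f \<noteq> e \<and> e \<inter> f \<noteq> {}}" for e
  have fin: "finite F" using F by (simp add: simple_graph_def)
  have card_meeting: "card ((\<lambda>f. {e, f}) ` meeting e) \<le> 2 * (D - 1)" if e: "e \<in> F" for e
  proof -
    obtain x y where xy: "e = {x, y}" "x \<noteq> y" using simple_graph_edgeE[OF F e] .
    have "meeting e \<subseteq> ({f\<in>F. x \<in> f} - {e}) \<union> ({f\<in>F. y \<in> f} - {e})"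
      using xy by (auto simp: meeting_def)
    have "card ((\<lambda>f. {e, f}) ` meeting e) \<le> card (meeting e)"
      by (rule card_image_le) (simp add: meeting_def fin)
    also have "\<dots> \<le> card (({f\<in>F. x \<in> f} - {e}) \<union> ({f\<in>F. y \<in> f} - {e}))"
      using \<open>meeting e \<subseteq> _\<close> by (rule card_mono[rotated]) (simp add: fin)
    also have "\<dots> \<le> card ({f\<in>F. x \<in> f} - {e}) + card ({f\<in>F. y \<in> f} - {e})"
      by (rule card_Un_le)
    also have "\<dots> = (degree F x - 1) + (degree F y - 1)"
      unfolding degree_def using e xy by (simp add: card_Diff_singleton)
    also have "\<dots> \<le> 2 * (D - 1)" using D[of x] D[of y] by simp
    finally show ?thesis .
  qed
  have "line_graph_edges F \<subseteq> (\<Union>e\<in>F. (\<lambda>f. {e, f}) ` meeting e)"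
    unfolding line_graph_edges_def meeting_def by blast
  then have "card (line_graph_edges F) \<le> card (\<Union>e\<in>F. (\<lambda>f. {e, f}) ` meeting e)"
    by (rule card_mono[rotated]) (simp add: fin meeting_def)
  also have "\<dots> \<le> (\<Sum>e\<in>F. card ((\<lambda>f. {e, f}) ` meeting e))" by (rule card_UN_le[OF fin])
  also have "\<dots> \<le> (\<Sum>e\<in>F. 2 * (D - 1))"
    using card_meeting by (rule sum_mono)
  finally show ?thesis by simp
qed

lemma double_choose_two: "2 * of_nat (n choose 2) = of_nat n * (of_nat n - 1 :: 'a::comm_ring_1)"
proof -
  have "2 * (n choose 2) = n * (n - 1)"
    by (metis choose_two dvd_mult_div_cancel even_mult_iff odd_two_times_div_two_nat dvd_triv_left)
  then have "2 * of_nat (n choose 2) = (of_nat (n * (n - 1)) :: 'a)" by (metis of_nat_mult of_nat_numeral)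
  then show ?thesis by (cases n) (auto simp: algebra_simps)
qed

lemma quadratic_gap_estimate:
  fixes k :: int
  assumes "k * k \<le> N" "20 \<le> k"
  shows "20 * k \<le> N" "k * (k + 1) + 2 * (k + 1) < 2 * N" "4 * (N * k) + 2 < (N - k + 1) * (N - k)"
proof -
  have "20 * k \<le> k * k" using assms by (intro mult_right_mono) auto
  then show "20 * k \<le> N" using assms by linarith
  then have gap: "19 * k \<le> N - k" by linarith
  then show "k * (k + 1) + 2 * (k + 1) < 2 * N" using assms by (simp add: algebra_simps)
  have "19 * k * (N - k) \<le> (N - k) * (N - k)" using gap assms by (intro mult_right_mono) auto
  then have "19 * (N * k) - 19 * (k * k) \<le> N * N - 2 * (N * k) + k * k"
    by (simp add: algebra_simps)
  moreover have "k * (19 * k) \<le> k * (N - k)" using gap assms by (intro mult_left_mono) auto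
  then have "20 * (k * k) \<le> N * k" by (simp add: algebra_simps)
  moreover have "400 \<le> k * k" using mult_mono[of 20 k 20 k] assms by simp
  moreover have "(N - k + 1) * (N - k) = N * N - 2 * (N * k) + k * k + N - k"
    by (simp add: algebra_simps)
  ultimately show "4 * (N * k) + 2 < (N - k + 1) * (N - k)" using gap assms by linarith
qed

lemma edge_count_bounds_miss_gap:
  fixes N k D I :: int
  assumes k: "k * k \<le> N" "20 \<le> k"
    and star_lower: "D * (D - 1) \<le> 2 * I"
    and star_upper: "2 * I \<le> D * (D - 1) + 2 * (N - D) + (N - D) * (N - D - 1)"
    and degree_upper: "I \<le> 2 * N * (D - 1)"
  shows "2 * I \<noteq> (N - k + 1) * (N - k) - 2"
proof
  assume I: "2 * I = (N - k + 1) * (N - k) - 2"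
  note estimates = quadratic_gap_estimate[OF k]
  have "k \<le> N - k" using estimates(1) k by linarith
  consider (large) "N - k + 1 \<le> D" | (middle) "k + 1 \<le> D" "D \<le> N - k" | (small) "D \<le> k"
    by linarith
  then show False
  proof cases
    case large
    have "(N - k + 1) * (N - k) \<le> D * (D - 1)"
      by (rule mult_mono) (use large \<open>k \<le> N - k\<close> k in auto)
    then show False using star_lower I by linarith
  next
    case middle
    have "D * (D - 1) + 2 * (N - D) + (N - D) * (N - D - 1)
        = (N - k) * (N - k - 1) + (k + 1) * k + 2 * ((D - (N - k)) * (D - (k + 1)))"
      by (simp add: algebra_simps)
    moreover have "(D - (N - k)) * (D - (k + 1)) \<le> 0"
      by (rule mult_nonpos_nonneg) (use middle in auto)
    ultimately show False using star_upper I estimates(2) by (simp add: algebra_simps)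
  next
    case small
    have "N * (D - 1) \<le> N * (k - 1)" by (rule mult_left_mono) (use small estimates(1) k in auto)
    then have "I \<le> 2 * (N * k) - 2 * N" using degree_upper by (simp add: algebra_simps)
    then show False using I estimates(1,3) k by linarith
  qed
qed

lemma triangle_free_card_line_graph_edges_ne:
  assumes F: "simple_graph F" "triangle_free F" and k: "k * k \<le> card F" "20 \<le> k"
  shows "card (line_graph_edges F) \<noteq> ((card F - k + 1) choose 2) - 1"
proof
  assume I_eq: "card (line_graph_edges F) = ((card F - k + 1) choose 2) - 1"
  define N where "N = card F"
  define I where "I = card (line_graph_edges F)"
  have fin: "finite F" using F(1) by (simp add: simple_graph_def)
  obtain v where max: "\<And>x. degree F x \<le> degree F v" using ex_max_degree[OF fin] by blast
  define D where "D = degree F v"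
  have int_k: "int k * int k \<le> int N" "20 \<le> int k" using k by (simp_all add: N_def flip: of_nat_mult)
  have "20 * k \<le> N" using quadratic_gap_estimate(1)[OF int_k] by linarith
  have "F \<noteq> {}" using \<open>20 * k \<le> N\<close> k(2) by (auto simp: N_def)
  then have "1 \<le> D" using max_degree_pos[OF F(1) _ max] by (simp add: D_def)
  have "D \<le> N" unfolding D_def N_def by (rule degree_le_card[OF fin])
  have eq: "2 * int I = (int N - int k + 1) * (int N - int k) - 2"
  proof -
    have "2 \<le> N - k + 1" using \<open>20 * k \<le> N\<close> k(2) by linarith
    then have "1 \<le> (N - k + 1) choose 2" by (simp add: Suc_le_eq)
    then have "int I + 1 = int ((N - k + 1) choose 2)" using I_eq by (simp add: N_def I_def)
    then show ?thesis using double_choose_two[of "N - k + 1", where 'a = int] \<open>20 * k \<le> N\<close>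
      by (simp add: of_nat_diff algebra_simps)
  qed
  have lower: "int D * (int D - 1) \<le> 2 * int I"
    using degree_choose_two_le_card_line_graph_edges[OF fin, of v] double_choose_two[of D, where 'a = int]
    by (simp add: D_def I_def)
  have upper: "2 * int I \<le> int D * (int D - 1) + 2 * (int N - int D) + (int N - int D) * (int N - int D - 1)"
    using card_line_graph_edges_le_star_split[OF F, of v] \<open>D \<le> N\<close>
      double_choose_two[of D, where 'a = int] double_choose_two[of "N - D", where 'a = int]
    by (simp add: D_def I_def N_def of_nat_diff)
  have degree_upper: "int I \<le> 2 * int N * (int D - 1)"
  proof -
    have "I \<le> 2 * N * (D - 1)"
      using card_line_graph_edges_le_max_degree[OF F(1) max] by (simp add: D_def I_def N_def)
    then have "int I \<le> int (2 * N * (D - 1))" by (simp only: of_nat_le_iff)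
    then show ?thesis using \<open>1 \<le> D\<close> by (simp add: of_nat_diff)
  qed
  show False using edge_count_bounds_miss_gap[OF int_k lower upper degree_upper] eq by simp
qed

lemma non_feasible_acyclic_line_gap:
  assumes "k * k \<le> N" "20 \<le> k"
  shows "non_feasible_acyclic_line N (((N - k + 1) choose 2) - 1)"
  unfolding non_feasible_acyclic_line_def feasible_acyclic_line_def
proof (intro conjI notI)
  have "k \<le> N" using assms le_square[of k] by linarith
  then show "1 \<le> N" using assms by linarith
  have "(N - k + 1) choose 2 \<le> N choose 2" using assms \<open>k \<le> N\<close> by (intro binomial_right_mono) simp
  then show "((N - k + 1) choose 2) - 1 \<le> N choose 2" by linarith
next
  assume "\<exists>F :: nat set set. acyclic_graph F \<and> card F = N \<and> card (line_graph_edges F) = ((N - k + 1) choose 2) - 1"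
  then obtain F :: "nat set set" where "acyclic_graph F" "card F = N"
    "card (line_graph_edges F) = ((N - k + 1) choose 2) - 1" by blast
  moreover from \<open>acyclic_graph F\<close> have "simple_graph F" "triangle_free F"
    by (simp_all add: acyclic_graph_def acyclic_graph_triangle_free)
  ultimately show False using triangle_free_card_line_graph_edges_ne assms by blast
qed

lemma choose_two_sqrt_gap_le:
  assumes "k * k \<le> N" "N < (k + 1)\<^sup>2" "3 \<le> k"
  shows "real (((N - k + 1) choose 2) - 1) \<le> real N ^ 2 / 2 - 1 / 2 * real N * sqrt (real N)"
proof -
  have "k \<le> N" using assms(1) le_square[of k] by linarith
  have "real N < real ((k + 1)\<^sup>2)" using assms(2) by (simp only: of_nat_less_iff)
  then have "sqrt (real N) < real k + 1" by (simp add: add.commute real_less_lsqrt)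
  then have "real N * sqrt (real N) \<le> real N * (real k + 1)" by (intro mult_left_mono) auto
  moreover have "3 * real N \<le> real k * real N" using assms(3) by (intro mult_right_mono) auto
  moreover have "real k * real k \<le> real N" using assms(1) by (simp flip: of_nat_mult)
  moreover have "2 * real ((N - k + 1) choose 2) = (real N - real k + 1) * (real N - real k)"
    using double_choose_two[of "N - k + 1", where 'a = real] \<open>k \<le> N\<close> by (simp add: of_nat_diff)
  moreover have "real (((N - k + 1) choose 2) - 1) \<le> real ((N - k + 1) choose 2)" by simp
  ultimately show ?thesis by (simp add: power2_eq_square algebra_simps)
qed

theorem mainTheorem9:
  shows "\<exists>c1::real. c1 > 0 \<and> (\<exists>N0::nat. \<forall>N\<ge>N0.
     (\<exists>M. non_feasible_acyclic_line N M) \<and>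
     real (LEAST M. non_feasible_acyclic_line N M) \<le> real N ^ 2 / 2 - c1 * real N * sqrt (real N))"
proof -
  have "(\<exists>M. non_feasible_acyclic_line N M) \<and>
      real (LEAST M. non_feasible_acyclic_line N M) \<le> real N ^ 2 / 2 - 1 / 2 * real N * sqrt (real N)"
    if "400 \<le> N" for N
  proof -
    define k where "k = floor_sqrt N"
    have "k * k \<le> N" "N < (k + 1)\<^sup>2"
      using floor_sqrt_power2_le[of N] Suc_floor_sqrt_power2_gt[of N] by (simp_all add: k_def power2_eq_square)
    moreover have "20 \<le> k" unfolding k_def using that by (intro le_floor_sqrtI) simp
    ultimately have gap: "non_feasible_acyclic_line N (((N - k + 1) choose 2) - 1)"
      and "real (((N - k + 1) choose 2) - 1) \<le> real N ^ 2 / 2 - 1 / 2 * real N * sqrt (real N)"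
      using non_feasible_acyclic_line_gap choose_two_sqrt_gap_le by simp_all
    moreover have "(LEAST M. non_feasible_acyclic_line N M) \<le> ((N - k + 1) choose 2) - 1"
      using gap by (rule Least_le)
    ultimately show ?thesis by force
  qed
  then show ?thesis by (intro exI[of _ "1 / 2"] conjI exI[of _ 400]) simp_all
qed

end
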